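(* Let $k\geq 2$ be an integer. The function $F^k$ is increasing on the interval $(2(k-1),\infty)$.
   Context: For a positive integer $k$, define $F^k:(0,\infty)\to\mathbb{R}$ by $F^k(x)=\delta_0^k(x)-k(x-k)-1$, where $\delta_0^k(x)=2x\sum_{j=1}^{k/2}\cos\left(\frac{(k-(2j-1))\pi}{x}\right)$ if $k$ is even, and $\delta_0^k(x)=x+2x\sum_{j=1}^{(k-1)/2}\cos\left(\frac{(k-(2j-1))\pi}{x}\right)$ if $k$ is odd (an empty sum is $0$). *)

theory Defs
  imports "HOL-Analysis.Analysis"
begin

definition delta0 :: "nat \<Rightarrow> real \<Rightarrow> real" where
  "delta0 k x =
     (if even k
      then 2 * x * (\<Sum>j=1..k div 2. cos ((real k - (2 * real j - 1)) * pi / x))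
      else x + 2 * x * (\<Sum>j=1..(k - 1) div 2. cos ((real k - (2 * real j - 1)) * pi / x)))"

definition F :: "nat \<Rightarrow> real \<Rightarrow> real" where
  "F k x = delta0 k x - real k * (x - real k) - 1"

end

theory Submission
  imports Defs
begin

text \<open>With \<open>N = k div 2\<close> and \<open>a j = (k - (2j - 1))\<pi>\<close>, the function \<open>F k x\<close> equals
  \<open>k\<^sup>2 - 1\<close> plus twice the sum over \<open>j = 1..N\<close> of \<open>x cos (a j / x) - x\<close>; for odd \<open>k\<close>
  the extra summand \<open>x\<close> of \<open>delta0\<close> cancels against \<open>-k x\<close>. The derivative of
  \<open>x cos (a / x) - x\<close> is \<open>cos t + t sin t - 1\<close> with \<open>t = a / x\<close>, which is positive for
  \<open>0 < t \<le> \<pi>/2\<close> because \<open>cos t + t sin t\<close> has derivative \<open>t cos t \<ge> 0\<close> there. So each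
  summand increases for \<open>x > 2 a j / \<pi>\<close>, and the largest of these thresholds, \<open>2 a 1 / \<pi>\<close>,
  is \<open>2(k - 1)\<close>.\<close>

lemma cos_add_mult_sin_gt_one:
  fixes t :: real
  assumes "0 < t" "t \<le> pi / 2"
  shows "1 < cos t + t * sin t"
proof -
  have "(\<lambda>s. cos s + s * sin s) 0 < (\<lambda>s. cos s + s * sin s) t"
  proof (rule DERIV_pos_imp_increasing_open[OF assms(1)])
    fix s :: real
    assume s: "0 < s" "s < t"
    have "DERIV (\<lambda>s. cos s + s * sin s) s :> s * cos s"
      by (auto intro!: derivative_eq_intros)
    moreover have "cos s > 0"
      using s assms by (intro cos_gt_zero_pi) auto
    ultimately show "\<exists>y. DERIV (\<lambda>s. cos s + s * sin s) s :> y \<and> y > 0"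
      using s by (intro exI[of _ "s * cos s"]) auto
  next
    show "continuous_on {0..t} (\<lambda>s. cos s + s * sin s)"
      by (intro continuous_intros)
  qed
  then show ?thesis by simp
qed

lemma strict_mono_on_mult_cos_divide_minus:
  fixes a :: real
  assumes "a > 0"
  shows "strict_mono_on {2 * a / pi<..} (\<lambda>x. x * cos (a / x) - x)"
proof (rule strict_mono_onI)
  fix x y :: real
  assume x: "x \<in> {2 * a / pi<..}" and "x < y"
  show "x * cos (a / x) - x < y * cos (a / y) - y"
  proof (rule DERIV_pos_imp_increasing[OF \<open>x < y\<close>, of "\<lambda>x. x * cos (a / x) - x", simplified])
    fix z :: real
    assume "x \<le> z"
    have "2 * a < x * pi"
      using x by (simp add: divide_less_eq)
    also have "\<dots> \<le> z * pi"
      using \<open>x \<le> z\<close> by simp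
    finally have "2 * a < z * pi" .
    then have "0 < z * pi"
      using assms by linarith
    then have z_pos: "z > 0"
      using pi_gt_zero by (rule zero_less_mult_pos2)
    have t_le: "a / z \<le> pi / 2" and t_pos: "0 < a / z"
      using \<open>2 * a < z * pi\<close> z_pos assms by (simp_all add: field_simps)
    have "DERIV (\<lambda>z. z * cos (a / z) - z) z :> cos (a / z) + a / z * sin (a / z) - 1"
      using z_pos by (auto intro!: derivative_eq_intros simp: field_simps power2_eq_square)
    moreover have "cos (a / z) + a / z * sin (a / z) - 1 > 0"
      using cos_add_mult_sin_gt_one[OF t_pos t_le] by simp
    ultimately show "\<exists>D. DERIV (\<lambda>z. z * cos (a / z) - z) z :> D \<and> 0 < D"
      by blast
  qed
qed

lemma F_eq_sum:
  "F k x = real k ^ 2 - 1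
     + 2 * (\<Sum>j=1..k div 2. x * cos ((real k - (2 * real j - 1)) * pi / x) - x)"
proof -
  define N where "N = k div 2"
  define S where "S = (\<Sum>j=1..N. cos ((real k - (2 * real j - 1)) * pi / x))"
  have sum_eq: "(\<Sum>j=1..N. x * cos ((real k - (2 * real j - 1)) * pi / x) - x) = x * S - real N * x"
    by (simp add: S_def sum_subtractf sum_distrib_left)
  show ?thesis
  proof (cases "even k")
    case True
    then have "F k x = 2 * x * S - real k * (x - real k) - 1"
      by (simp add: F_def delta0_def S_def N_def)
    moreover have "real k = 2 * real N"
      using True unfolding N_def by (metis even_two_times_div_two of_nat_mult of_nat_numeral)
    ultimately show ?thesis
      unfolding N_def[symmetric] sum_eq by (simp add: power2_eq_square algebra_simps)
  next
    case False
    then have "(k - 1) div 2 = N" and k_eq: "k = 2 * N + 1"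
      unfolding N_def by presburger+
    then have "F k x = x + 2 * x * S - real k * (x - real k) - 1"
      using False by (simp add: F_def delta0_def S_def)
    moreover have "real k = 2 * real N + 1"
      using k_eq by simp
    ultimately show ?thesis
      unfolding N_def[symmetric] sum_eq by (simp add: power2_eq_square algebra_simps)
  qed
qed

theorem proposition3p1:
  fixes k :: nat
  assumes "k \<ge> 2"
  shows "strict_mono_on {2 * (real k - 1)<..} (F k)"
proof (rule strict_mono_onI)
  fix x y :: real
  assume x: "x \<in> {2 * (real k - 1)<..}" and "x < y"
  have "(\<Sum>j=1..k div 2. x * cos ((real k - (2 * real j - 1)) * pi / x) - x)
      < (\<Sum>j=1..k div 2. y * cos ((real k - (2 * real j - 1)) * pi / y) - y)"
  proof (rule sum_strict_mono)
    show "{1..k div 2} \<noteq> {}"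
      using assms by auto
  next
    fix j
    assume j: "j \<in> {1..k div 2}"
    let ?a = "(real k - (2 * real j - 1)) * pi"
    have "?a > 0"
      using j by auto
    then have "strict_mono_on {2 * ?a / pi<..} (\<lambda>x. x * cos (?a / x) - x)"
      by (rule strict_mono_on_mult_cos_divide_minus)
    moreover have "2 * ?a / pi < x"
      using j x by auto
    ultimately show "x * cos (?a / x) - x < y * cos (?a / y) - y"
      using \<open>x < y\<close> by (simp add: strict_mono_on_def)
  qed simp
  then show "F k x < F k y"
    unfolding F_eq_sum by simp
qed

end
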